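(* Let $c = 1.40759\ldots$ denote the largest real root of $x^6 - 2x^2 - 2x - 1 = 0$ (note $c < \sqrt{2}$). For all integers $n \ge 1$ and $t$ with $0 \le t \le n/2$, every triangle-free graph $G$ on $n$ vertices that contains no induced matching of size $t+1$ satisfies \[ \mathrm{mis}(G) \le 2^t c^{\,n-2t}. \] That is, $\mathrm{mis}_{\triangle,t}(n) \le 2^t c^{n-2t}$.
   Context: All graphs are finite and simple. For a graph $G$, $\mathrm{mis}(G)$ denotes the number of maximal independent sets of $G$. An induced matching in $G$ is a set of pairwise vertex-disjoint edges of $G$ such that the subgraph induced by their endpoints consists of exactly these edges; its size is the number of edges. $\mathrm{mis}_{\triangle,t}(n)$ denotes the maximum of $\mathrm{mis}(G)$ over all $n$-vertex triangle-free graphs $G$ containing no induced matching of size $t+1$. *)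

theory Defs
  imports Complex_Main
begin

definition simple_graph :: "'a set \<Rightarrow> ('a \<Rightarrow> 'a \<Rightarrow> bool) \<Rightarrow> bool" where
  "simple_graph V E \<longleftrightarrow> finite V \<and> (\<forall>u v. E u v \<longrightarrow> u \<in> V \<and> v \<in> V)
     \<and> (\<forall>u v. E u v \<longrightarrow> E v u) \<and> (\<forall>u. \<not> E u u)"

definition triangle_free :: "'a set \<Rightarrow> ('a \<Rightarrow> 'a \<Rightarrow> bool) \<Rightarrow> bool" where
  "triangle_free V E \<longleftrightarrow> \<not> (\<exists>u\<in>V. \<exists>v\<in>V. \<exists>w\<in>V. E u v \<and> E v w \<and> E u w)"

definition independent_set :: "'a set \<Rightarrow> ('a \<Rightarrow> 'a \<Rightarrow> bool) \<Rightarrow> 'a set \<Rightarrow> bool" where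
  "independent_set V E S \<longleftrightarrow> S \<subseteq> V \<and> (\<forall>u\<in>S. \<forall>v\<in>S. \<not> E u v)"

definition maximal_independent_set :: "'a set \<Rightarrow> ('a \<Rightarrow> 'a \<Rightarrow> bool) \<Rightarrow> 'a set \<Rightarrow> bool" where
  "maximal_independent_set V E S \<longleftrightarrow> independent_set V E S
     \<and> (\<forall>T. independent_set V E T \<and> S \<subseteq> T \<longrightarrow> T = S)"

definition mis :: "'a set \<Rightarrow> ('a \<Rightarrow> 'a \<Rightarrow> bool) \<Rightarrow> nat" where
  "mis V E = card {S. maximal_independent_set V E S}"

definition graph_edges :: "'a set \<Rightarrow> ('a \<Rightarrow> 'a \<Rightarrow> bool) \<Rightarrow> 'a set set" where
  "graph_edges V E = {{u, v} | u v. u \<in> V \<and> v \<in> V \<and> E u v}"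

definition induced_matching :: "'a set \<Rightarrow> ('a \<Rightarrow> 'a \<Rightarrow> bool) \<Rightarrow> 'a set set \<Rightarrow> bool" where
  "induced_matching V E M \<longleftrightarrow> M \<subseteq> graph_edges V E
     \<and> (\<forall>e\<in>M. \<forall>f\<in>M. e \<noteq> f \<longrightarrow> e \<inter> f = {})
     \<and> (\<forall>u\<in>\<Union>M. \<forall>v\<in>\<Union>M. E u v \<longrightarrow> {u, v} \<in> M)"

definition c_const :: real where
  "c_const = Max {x :: real. x ^ 6 - 2 * x ^ 2 - 2 * x - 1 = 0}"

end

theory Submission
  imports Defs "HOL-Computational_Algebra.Polynomial"
begin

(* Induction on |V| for the bound c^n (2/c^2)^t, which equals 2^t c^(n-2t) when 2t <= n.
   A maximal independent set either avoids a vertex x or contains x and avoids its neighbours, so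
   mis G <= mis (G - x) + mis (G - N[x]); if u is a leaf with neighbour w, every maximal independent
   set meets {u, w}, so mis G <= mis (G - N[u]) + mis (G - N[w]). Deleting N[x] and N[y] for an
   edge xy lowers the induced matching number, because xy extends every induced matching of what
   is left. A vertex of degree at least 3, a leaf, or otherwise a path through a cycle (of length
   at least 4, by triangle-freeness) yields a recurrence that the bound satisfies as soon as
   7/5 <= c <= sqrt 2, and c = 1.40759... lies in this range. *)

section \<open>Induced subgraphs and induced matchings\<close>

definition induced_edges :: "('a \<Rightarrow> 'a \<Rightarrow> bool) \<Rightarrow> 'a set \<Rightarrow> 'a \<Rightarrow> 'a \<Rightarrow> bool" where
  "induced_edges E W a b \<longleftrightarrow> E a b \<and> a \<in> W \<and> b \<in> W"

definition nbhd :: "('a \<Rightarrow> 'a \<Rightarrow> bool) \<Rightarrow> 'a \<Rightarrow> 'a set" where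
  "nbhd E x = {y. E x y}"

definition no_induced_matching :: "'a set \<Rightarrow> ('a \<Rightarrow> 'a \<Rightarrow> bool) \<Rightarrow> nat \<Rightarrow> bool" where
  "no_induced_matching V E k \<longleftrightarrow> \<not> (\<exists>M. induced_matching V E M \<and> card M = k)"

lemma simple_graph_induced_edges:
  "simple_graph V E \<Longrightarrow> W \<subseteq> V \<Longrightarrow> simple_graph W (induced_edges E W)"
  unfolding simple_graph_def induced_edges_def by (auto intro: finite_subset)

lemma triangle_free_induced_edges:
  "triangle_free V E \<Longrightarrow> W \<subseteq> V \<Longrightarrow> triangle_free W (induced_edges E W)"
  unfolding triangle_free_def induced_edges_def by blast

lemma induced_edges_induced_edges:
  "W' \<subseteq> W \<Longrightarrow> induced_edges (induced_edges E W) W' = induced_edges E W'"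
  unfolding induced_edges_def by (auto simp: fun_eq_iff)

lemma nbhd_induced_edges: "x \<in> W \<Longrightarrow> nbhd (induced_edges E W) x = nbhd E x \<inter> W"
  unfolding nbhd_def induced_edges_def by auto

lemma nbhd_subset: "simple_graph V E \<Longrightarrow> nbhd E x \<subseteq> V"
  unfolding simple_graph_def nbhd_def by auto

lemma finite_nbhd: "simple_graph V E \<Longrightarrow> finite (nbhd E x)"
  by (meson finite_subset nbhd_subset simple_graph_def)

lemma induced_matching_Union_subset: "induced_matching V E M \<Longrightarrow> \<Union>M \<subseteq> V"
  unfolding induced_matching_def graph_edges_def by auto

lemma induced_matching_induced_edges:
  assumes "W \<subseteq> V" "induced_matching W (induced_edges E W) M"
  shows "induced_matching V E M"
proof -
  have M: "M \<subseteq> graph_edges W (induced_edges E W)" "\<forall>e\<in>M. \<forall>f\<in>M. e \<noteq> f \<longrightarrow> e \<inter> f = {}"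
    "\<forall>u\<in>\<Union>M. \<forall>v\<in>\<Union>M. induced_edges E W u v \<longrightarrow> {u, v} \<in> M"
    using assms(2) unfolding induced_matching_def by auto
  have "graph_edges W (induced_edges E W) \<subseteq> graph_edges V E"
    using assms(1) unfolding graph_edges_def induced_edges_def by blast
  moreover have "{u, v} \<in> M" if "u \<in> \<Union>M" "v \<in> \<Union>M" "E u v" for u v
  proof -
    have "induced_edges E W u v"
      using that induced_matching_Union_subset[OF assms(2)] unfolding induced_edges_def by blast
    then show ?thesis
      using M(3) that(1,2) by blast
  qed
  ultimately show ?thesis
    using M(1,2) unfolding induced_matching_def by blast
qed

lemma no_induced_matching_induced_edges:
  "no_induced_matching V E k \<Longrightarrow> W \<subseteq> V \<Longrightarrow> no_induced_matching W (induced_edges E W) k"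
  unfolding no_induced_matching_def using induced_matching_induced_edges by blast

lemma induced_matching_empty: "induced_matching V E {}"
  by (simp add: induced_matching_def)

lemma finite_induced_matching:
  assumes "simple_graph V E" "induced_matching V E M"
  shows "finite M"
proof (rule finite_subset)
  show "M \<subseteq> (\<lambda>(u, v). {u, v}) ` (V \<times> V)"
    using assms(2) unfolding induced_matching_def graph_edges_def by auto
  show "finite ((\<lambda>(u, v). {u, v}) ` (V \<times> V))"
    using assms(1) unfolding simple_graph_def by simp
qed

lemma induced_matching_insert_edge:
  assumes "simple_graph V E" "E x y"
    and "insert x (nbhd E x) \<union> insert y (nbhd E y) \<subseteq> X"
    and "induced_matching (V - X) (induced_edges E (V - X)) M"
  shows "induced_matching V E (insert {x, y} M)"
proof -
  have sym: "E u v \<Longrightarrow> E v u" and irrefl: "\<not> E u u" and in_V: "E u v \<Longrightarrow> u \<in> V \<and> v \<in> V"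
    for u v using assms(1) unfolding simple_graph_def by blast+
  have M: "M \<subseteq> graph_edges V E" "\<forall>e\<in>M. \<forall>f\<in>M. e \<noteq> f \<longrightarrow> e \<inter> f = {}"
    "\<forall>u\<in>\<Union>M. \<forall>v\<in>\<Union>M. E u v \<longrightarrow> {u, v} \<in> M"
    using induced_matching_induced_edges[OF Diff_subset assms(4)] unfolding induced_matching_def by auto
  have far: "\<Union>M \<subseteq> V - X"
    using induced_matching_Union_subset[OF assms(4)] .
  then have no_edge: "\<not> E x u" "\<not> E y u" if "u \<in> \<Union>M" for u
    using assms(3) that unfolding nbhd_def by blast+
  show ?thesis
    unfolding induced_matching_def
  proof (intro conjI ballI impI)
    show "insert {x, y} M \<subseteq> graph_edges V E"
      using M(1) in_V[OF assms(2)] assms(2) unfolding graph_edges_def by blast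
  next
    fix e f assume "e \<in> insert {x, y} M" "f \<in> insert {x, y} M" "e \<noteq> f"
    moreover have "{x, y} \<inter> g = {}" if "g \<in> M" for g
      using far assms(3) that by blast
    ultimately show "e \<inter> f = {}"
      using M(2) by blast
  next
    fix u v assume u: "u \<in> \<Union>(insert {x, y} M)" and v: "v \<in> \<Union>(insert {x, y} M)" and "E u v"
    then consider "u \<in> \<Union>M" "v \<in> \<Union>M" | "u \<in> {x, y}" "v \<in> {x, y}"
      using no_edge sym by blast
    then show "{u, v} \<in> insert {x, y} M"
      using M(3) \<open>E u v\<close> irrefl by cases (auto simp: insert_commute)
  qed
qed

lemma no_induced_matching_delete_edge_nbhd:
  assumes "simple_graph V E" "E x y"
    and "insert x (nbhd E x) \<union> insert y (nbhd E y) \<subseteq> X"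
    and "no_induced_matching V E (Suc k)"
  shows "no_induced_matching (V - X) (induced_edges E (V - X)) k"
  unfolding no_induced_matching_def
proof
  assume "\<exists>M. induced_matching (V - X) (induced_edges E (V - X)) M \<and> card M = k"
  then obtain M where M: "induced_matching (V - X) (induced_edges E (V - X)) M" "card M = k"
    by blast
  have "finite M"
    using finite_induced_matching[OF simple_graph_induced_edges[OF assms(1)] M(1)] by simp
  moreover have "{x, y} \<notin> M"
    using induced_matching_Union_subset[OF M(1)] assms(3) by blast
  ultimately have "card (insert {x, y} M) = Suc k"
    using M(2) by simp
  with induced_matching_insert_edge[OF assms(1-3) M(1)] assms(4) show False
    unfolding no_induced_matching_def by blast
qed

section \<open>Counting maximal independent sets\<close>

lemma finite_maximal_independent_sets:
  assumes "simple_graph V E"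
  shows "finite {S. maximal_independent_set V E S}"
proof (rule finite_subset)
  show "{S. maximal_independent_set V E S} \<subseteq> Pow V"
    unfolding maximal_independent_set_def independent_set_def by blast
  show "finite (Pow V)"
    using assms unfolding simple_graph_def by simp
qed

lemma independent_set_induced_edges:
  "W \<subseteq> V \<Longrightarrow> independent_set W (induced_edges E W) T \<longleftrightarrow> T \<subseteq> W \<and> independent_set V E T"
  unfolding independent_set_def induced_edges_def by blast

lemma maximal_independent_set_dominating:
  assumes "simple_graph V E" "maximal_independent_set V E S" "u \<in> V" "u \<notin> S"
  obtains v where "v \<in> S" "E u v"
proof -
  have sym: "E a b \<Longrightarrow> E b a" and irrefl: "\<not> E a a" for a b
    using assms(1) unfolding simple_graph_def by blast+
  have S: "S \<subseteq> V" "\<forall>a\<in>S. \<forall>b\<in>S. \<not> E a b"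
    using assms(2) unfolding maximal_independent_set_def independent_set_def by auto
  have "\<not> independent_set V E (insert u S)"
    using assms(2,4) unfolding maximal_independent_set_def by blast
  then obtain a b where "a \<in> insert u S" "b \<in> insert u S" "E a b"
    using S(1) assms(3) unfolding independent_set_def by blast
  then show ?thesis
    using S(2) sym irrefl that by blast
qed

lemma mis_edgeless:
  assumes "\<And>u v. \<not> E u v"
  shows "mis V E = 1"
proof -
  have "{S. maximal_independent_set V E S} = {V}"
    using assms unfolding maximal_independent_set_def independent_set_def by blast
  then show ?thesis
    unfolding mis_def by simp
qed

lemma card_mis_not_containing_le:
  assumes "simple_graph V E"
  shows "card {S. maximal_independent_set V E S \<and> x \<notin> S}
    \<le> mis (V - {x}) (induced_edges E (V - {x}))"
  unfolding mis_def
proof (rule card_mono)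
  let ?W = "V - {x}"
  show "finite {S. maximal_independent_set ?W (induced_edges E ?W) S}"
    using finite_maximal_independent_sets[OF simple_graph_induced_edges[OF assms Diff_subset]] .
  show "{S. maximal_independent_set V E S \<and> x \<notin> S}
      \<subseteq> {S. maximal_independent_set ?W (induced_edges E ?W) S}"
  proof clarify
    fix S assume "maximal_independent_set V E S" "x \<notin> S"
    moreover from this have "S \<subseteq> ?W"
      unfolding maximal_independent_set_def independent_set_def by blast
    ultimately show "maximal_independent_set ?W (induced_edges E ?W) S"
      unfolding maximal_independent_set_def independent_set_induced_edges[OF Diff_subset] by blast
  qed
qed

lemma card_mis_containing_le:
  assumes "simple_graph V E"
  shows "card {S. maximal_independent_set V E S \<and> x \<in> S}
    \<le> mis (V - insert x (nbhd E x)) (induced_edges E (V - insert x (nbhd E x)))"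
  unfolding mis_def
proof (rule card_inj_on_le)
  let ?W = "V - insert x (nbhd E x)"
  have sym: "E u v \<Longrightarrow> E v u" and irrefl: "\<not> E u u" for u v
    using assms unfolding simple_graph_def by blast+
  show "inj_on (\<lambda>S. S - {x}) {S. maximal_independent_set V E S \<and> x \<in> S}"
    by (rule inj_onI) (metis (mono_tags, lifting) insert_Diff mem_Collect_eq)
  show "finite {S. maximal_independent_set ?W (induced_edges E ?W) S}"
    using finite_maximal_independent_sets[OF simple_graph_induced_edges[OF assms Diff_subset]] .
  show "(\<lambda>S. S - {x}) ` {S. maximal_independent_set V E S \<and> x \<in> S}
      \<subseteq> {S. maximal_independent_set ?W (induced_edges E ?W) S}"
  proof clarify
    fix S assume S: "maximal_independent_set V E S" "x \<in> S"
    then have SV: "S \<subseteq> V" and indep: "\<forall>u\<in>S. \<forall>v\<in>S. \<not> E u v"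
      and maximal: "\<And>T. independent_set V E T \<Longrightarrow> S \<subseteq> T \<Longrightarrow> T = S"
      unfolding maximal_independent_set_def independent_set_def by auto
    have "S - {x} \<subseteq> ?W"
      using SV indep S(2) unfolding nbhd_def by blast
    moreover have "independent_set V E (S - {x})"
      using SV indep unfolding independent_set_def by blast
    moreover have "T = S - {x}"
      if T: "T \<subseteq> ?W" "independent_set V E T" "S - {x} \<subseteq> T" for T
    proof -
      have "\<not> E x v" "\<not> E v x" if "v \<in> T" for v
        using T(1) that sym unfolding nbhd_def by blast+
      then have "independent_set V E (insert x T)"
        using T(2) SV S(2) irrefl unfolding independent_set_def by blast
      then have "insert x T = S"
        using maximal T(3) by blast
      then show ?thesis
        using T(1) by blast
    qed
    ultimately show "maximal_independent_set ?W (induced_edges E ?W) (S - {x})"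
      unfolding maximal_independent_set_def independent_set_induced_edges[OF Diff_subset] by blast
  qed
qed

lemma mis_le_split:
  assumes "simple_graph V E"
  shows "mis V E \<le> mis (V - {x}) (induced_edges E (V - {x}))
    + mis (V - insert x (nbhd E x)) (induced_edges E (V - insert x (nbhd E x)))"
proof -
  have "{S. maximal_independent_set V E S} = {S. maximal_independent_set V E S \<and> x \<in> S}
      \<union> {S. maximal_independent_set V E S \<and> x \<notin> S}"
    by blast
  then have "mis V E \<le> card {S. maximal_independent_set V E S \<and> x \<in> S}
      + card {S. maximal_independent_set V E S \<and> x \<notin> S}"
    unfolding mis_def by (metis card_Un_le)
  then show ?thesis
    using card_mis_containing_le[OF assms, of x] card_mis_not_containing_le[OF assms, of x]
    by linarith
qed

lemma mis_le_leaf_split: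
  assumes "simple_graph V E" "nbhd E u = {w}"
  shows "mis V E \<le> mis (V - insert u (nbhd E u)) (induced_edges E (V - insert u (nbhd E u)))
    + mis (V - insert w (nbhd E w)) (induced_edges E (V - insert w (nbhd E w)))"
proof -
  let ?with = "\<lambda>v. {S. maximal_independent_set V E S \<and> v \<in> S}"
  have "E u w"
    using assms(2) unfolding nbhd_def by blast
  then have "u \<in> V"
    using assms(1) unfolding simple_graph_def by blast
  have "u \<in> S \<or> w \<in> S" if S: "maximal_independent_set V E S" for S
  proof (cases "u \<in> S")
    case False
    then obtain v where "v \<in> S" "E u v"
      using maximal_independent_set_dominating[OF assms(1) S \<open>u \<in> V\<close>] by blast
    then have "v \<in> nbhd E u"
      by (simp add: nbhd_def)
    then show ?thesis
      using assms(2) \<open>v \<in> S\<close> by simp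
  qed simp
  then have "{S. maximal_independent_set V E S} = ?with u \<union> ?with w"
    by blast
  then have "mis V E \<le> card (?with u) + card (?with w)"
    unfolding mis_def by (metis card_Un_le)
  then show ?thesis
    using card_mis_containing_le[OF assms(1), of u] card_mis_containing_le[OF assms(1), of w]
    by linarith
qed

lemma mis_delete_vertex_le_leaf_split:
  assumes "simple_graph V E" "nbhd E a = {v, a'}" "a' \<noteq> v" "v \<notin> nbhd E a'"
  shows "mis (V - {v}) (induced_edges E (V - {v}))
    \<le> mis (V - {v, a, a'}) (induced_edges E (V - {v, a, a'}))
      + mis (V - insert v (insert a' (nbhd E a'))) (induced_edges E (V - insert v (insert a' (nbhd E a'))))"
proof -
  let ?W = "V - {v}" and ?Y = "V - insert v (insert a' (nbhd E a'))"
  have "E a v" "E a a'"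
    using assms(2) unfolding nbhd_def by blast+
  then have "a \<in> ?W" "a' \<in> ?W"
    using assms(1,3) unfolding simple_graph_def by auto
  have "nbhd (induced_edges E ?W) a = {v, a'} \<inter> ?W"
    using nbhd_induced_edges[OF \<open>a \<in> ?W\<close>] assms(2) by simp
  also have "\<dots> = {a'}"
    using \<open>a' \<in> ?W\<close> by blast
  finally have "nbhd (induced_edges E ?W) a = {a'}" .
  moreover have "nbhd (induced_edges E ?W) a' = nbhd E a'"
    using nbhd_induced_edges[OF \<open>a' \<in> ?W\<close>] nbhd_subset[OF assms(1)] assms(4) by blast
  ultimately have "mis ?W (induced_edges E ?W)
    \<le> mis (?W - insert a {a'}) (induced_edges (induced_edges E ?W) (?W - insert a {a'}))
      + mis (?W - insert a' (nbhd E a')) (induced_edges (induced_edges E ?W) (?W - insert a' (nbhd E a')))"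
    using mis_le_leaf_split[OF simple_graph_induced_edges[OF assms(1) Diff_subset]] by metis
  moreover have "?W - insert a {a'} = V - {v, a, a'}" "?W - insert a' (nbhd E a') = ?Y"
    by blast+
  moreover have "induced_edges (induced_edges E ?W) (V - {v, a, a'}) = induced_edges E (V - {v, a, a'})"
    "induced_edges (induced_edges E ?W) ?Y = induced_edges E ?Y"
    by (rule induced_edges_induced_edges; blast)+
  ultimately show ?thesis
    by simp
qed

section \<open>The bound and its recurrences\<close>

(* Unlike 2^t c^(n-2t), this form is multiplicative in (n, t) without the side condition 2t <= n,
   which the induction does not preserve. *)
definition mis_bound :: "real \<Rightarrow> nat \<Rightarrow> nat \<Rightarrow> real" where
  "mis_bound c n t = c ^ n * (2 / c ^ 2) ^ t"

lemma mis_bound_nonneg: "0 < c \<Longrightarrow> 0 \<le> mis_bound c n t"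
  by (simp add: mis_bound_def)

lemma one_le_mis_bound:
  assumes "1 \<le> c" "c ^ 2 \<le> 2"
  shows "1 \<le> mis_bound c n t"
proof -
  have "1 \<le> 2 / c ^ 2"
    using assms by simp
  then have "1 * 1 \<le> c ^ n * (2 / c ^ 2) ^ t"
    using assms(1) by (intro mult_mono one_le_power) auto
  then show ?thesis
    unfolding mis_bound_def by simp
qed

lemma mis_bound_eq:
  assumes "c \<noteq> 0" "2 * t \<le> n"
  shows "mis_bound c n t = 2 ^ t * c ^ (n - 2 * t)"
proof -
  have "c ^ n = (c ^ 2) ^ t * c ^ (n - 2 * t)"
    using assms(2) by (simp flip: power_mult power_add)
  then show ?thesis
    using assms(1) by (simp add: mis_bound_def power_divide)
qed

lemma mis_bound_shift: "mis_bound c (m + k) (t + j) = mis_bound c m t * c ^ k * (2 / c ^ 2) ^ j"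
  by (simp add: mis_bound_def power_add)

lemma mis_bound_mono: "1 \<le> c \<Longrightarrow> m \<le> n \<Longrightarrow> mis_bound c m t \<le> mis_bound c n t"
  unfolding mis_bound_def by (simp add: power_increasing)

lemma mis_bound_rec_high_degree:
  assumes "7/5 \<le> c" "4 \<le> n"
  shows "mis_bound c (n - 1) t + mis_bound c (n - 4) t \<le> mis_bound c n t"
proof -
  define m where "m = n - 4"
  have "(7/5) ^ 3 * (2/5) \<le> c ^ 3 * (c - 1)"
    using assms(1) by (intro mult_mono power_mono) auto
  then have "c ^ 3 + 1 \<le> c ^ 4"
    by (simp add: algebra_simps power_numeral_reduce)
  then have "mis_bound c m t * (c ^ 3 + 1) \<le> mis_bound c m t * c ^ 4"
    using assms(1) by (intro mult_left_mono mis_bound_nonneg) auto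
  moreover have "n - 1 = m + 3" "n = m + 4"
    using assms(2) unfolding m_def by auto
  ultimately show ?thesis
    using mis_bound_shift[of c m 3 t 0] mis_bound_shift[of c m 4 t 0] by (simp add: algebra_simps)
qed

lemma mis_bound_rec_isolated_edge:
  assumes "c \<noteq> 0" "2 \<le> n"
  shows "2 * mis_bound c (n - 2) t = mis_bound c n (Suc t)"
proof -
  have "n = (n - 2) + 2"
    using assms(2) by simp
  then show ?thesis
    using mis_bound_shift[of c "n - 2" 2 t 1] assms(1) by simp
qed

lemma mis_bound_rec_leaf:
  assumes "7/5 \<le> c" "3 \<le> n"
  shows "mis_bound c (n - 2) (Suc t) + mis_bound c (n - 3) t \<le> mis_bound c n (Suc t)"
proof -
  define m where "m = n - 3"
  have "2 / c \<le> 2 / (7/5)"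
    using assms(1) by (intro divide_left_mono) auto
  then have "2 / c + 1 \<le> 2 * c"
    using assms(1) by simp
  then have "mis_bound c m t * (2 / c + 1) \<le> mis_bound c m t * (2 * c)"
    using assms(1) by (intro mult_left_mono mis_bound_nonneg) auto
  moreover have "n - 2 = m + 1" "n = m + 3"
    using assms(2) unfolding m_def by auto
  ultimately show ?thesis
    using mis_bound_shift[of c m 1 t 1] mis_bound_shift[of c m 3 t 1] assms(1)
    by (simp add: algebra_simps power2_eq_square power3_eq_cube)
qed

lemma mis_bound_rec_induced_path:
  assumes "7/5 \<le> c" "4 \<le> n"
  shows "2 * mis_bound c (n - 3) (Suc t) + mis_bound c (n - 4) t \<le> mis_bound c n (Suc t)"
proof -
  define m where "m = n - 4"
  have "4 / c \<le> 20 / 7"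
    using assms(1) by (simp add: field_simps)
  moreover have "(7/5) ^ 2 \<le> c ^ 2"
    using assms(1) by (intro power_mono) auto
  ultimately have "4 / c + 1 \<le> 2 * c ^ 2"
    by (simp add: power_divide)
  then have "mis_bound c m t * (4 / c + 1) \<le> mis_bound c m t * (2 * c ^ 2)"
    using assms(1) by (intro mult_left_mono mis_bound_nonneg) auto
  moreover have "n - 3 = m + 1" "n = m + 4"
    using assms(2) unfolding m_def by auto
  ultimately show ?thesis
    using mis_bound_shift[of c m 1 t 1] mis_bound_shift[of c m 4 t 1] assms(1)
    by (simp add: algebra_simps power2_eq_square power_numeral_reduce)
qed

locale mis_induction_step =
  fixes V :: "'a set" and E :: "'a \<Rightarrow> 'a \<Rightarrow> bool" and c :: real and t :: nat
  assumes simple: "simple_graph V E"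
    and no_triangle: "triangle_free V E"
    and no_matching: "no_induced_matching V E (Suc t)"
    and c_lower: "7/5 \<le> c"
    and induct_hyp: "\<And>X s. X \<subseteq> V \<Longrightarrow> X \<noteq> {}
      \<Longrightarrow> no_induced_matching (V - X) (induced_edges E (V - X)) (Suc s)
      \<Longrightarrow> mis (V - X) (induced_edges E (V - X)) \<le> mis_bound c (card V - card X) s"
begin

lemma sym: "E u v \<Longrightarrow> E v u" and irrefl: "\<not> E u u" and in_V: "E u v \<Longrightarrow> u \<in> V \<and> v \<in> V"
  using simple unfolding simple_graph_def by blast+

lemma card_closed_nbhd: "card (insert v (nbhd E v)) = Suc (card (nbhd E v))"
  using finite_nbhd[OF simple] irrefl by (simp add: nbhd_def)

lemma card_le_card_V: "X \<subseteq> V \<Longrightarrow> card X \<le> card V"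
  using simple card_mono unfolding simple_graph_def by blast

lemma mis_delete_le:
  assumes "X \<subseteq> V" "X \<noteq> {}"
  shows "mis (V - X) (induced_edges E (V - X)) \<le> mis_bound c (card V - card X) t"
  using induct_hyp[OF assms no_induced_matching_induced_edges[OF no_matching Diff_subset]] .

lemma mis_delete_edge_nbhd_le:
  assumes "E x y" "insert x (nbhd E x) \<union> insert y (nbhd E y) \<subseteq> X" "X \<subseteq> V" "t = Suc s"
  shows "mis (V - X) (induced_edges E (V - X)) \<le> mis_bound c (card V - card X) s"
proof (rule induct_hyp)
  show "X \<noteq> {}"
    using assms(2) by blast
  show "no_induced_matching (V - X) (induced_edges E (V - X)) (Suc s)"
    using no_induced_matching_delete_edge_nbhd[OF simple assms(1,2)] no_matching assms(4) by blast
qed (use assms(3) in blast)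

lemma obtain_Suc_if_edge:
  assumes "E x y"
  obtains s where "t = Suc s"
proof -
  have "no_induced_matching (V - (insert x (nbhd E x) \<union> insert y (nbhd E y)))
      (induced_edges E (V - (insert x (nbhd E x) \<union> insert y (nbhd E y)))) t"
    by (rule no_induced_matching_delete_edge_nbhd[OF simple assms order_refl no_matching])
  then have "t \<noteq> 0"
    unfolding no_induced_matching_def by (metis card.empty induced_matching_empty)
  then show ?thesis
    using that not0_implies_Suc by blast
qed

lemma mis_le_if_high_degree:
  assumes "3 \<le> card (nbhd E v)"
  shows "mis V E \<le> mis_bound c (card V) t"
proof -
  let ?X = "insert v (nbhd E v)"
  have "nbhd E v \<noteq> {}"
    using assms by auto
  then obtain y where "E v y"
    unfolding nbhd_def by blast
  then have "?X \<subseteq> V"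
    using in_V nbhd_subset[OF simple] by blast
  have "4 \<le> card ?X"
    using assms card_closed_nbhd by simp
  then have n: "4 \<le> card V" "card V - card ?X \<le> card V - 4"
    using card_le_card_V[OF \<open>?X \<subseteq> V\<close>] by simp_all
  have "real (mis V E)
      \<le> real (mis (V - {v}) (induced_edges E (V - {v}))) + real (mis (V - ?X) (induced_edges E (V - ?X)))"
    using mis_le_split[OF simple, of v] by linarith
  also have "\<dots> \<le> mis_bound c (card V - 1) t + mis_bound c (card V - card ?X) t"
    using mis_delete_le[of "{v}"] mis_delete_le[of ?X] \<open>?X \<subseteq> V\<close> by simp
  also have "\<dots> \<le> mis_bound c (card V - 1) t + mis_bound c (card V - 4) t"
    using mis_bound_mono[OF _ n(2)] c_lower by simp
  also have "\<dots> \<le> mis_bound c (card V) t"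
    using mis_bound_rec_high_degree[OF c_lower n(1)] .
  finally show ?thesis .
qed

lemma mis_le_if_leaf:
  assumes "nbhd E u = {w}" "card (nbhd E w) \<le> 2"
  shows "mis V E \<le> mis_bound c (card V) t"
proof -
  have "E u w"
    using assms(1) unfolding nbhd_def by blast
  then obtain s where t: "t = Suc s"
    using obtain_Suc_if_edge by blast
  have "u \<in> nbhd E w"
    using sym[OF \<open>E u w\<close>] by (simp add: nbhd_def)
  have "u \<noteq> w"
    using irrefl \<open>E u w\<close> by blast
  have "{u, w} \<subseteq> V"
    using in_V[OF \<open>E u w\<close>] by blast
  then have n: "2 \<le> card V"
    using card_le_card_V[OF \<open>{u, w} \<subseteq> V\<close>] \<open>u \<noteq> w\<close> by simp
  have split: "mis V E \<le> mis (V - {u, w}) (induced_edges E (V - {u, w}))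
      + mis (V - insert w (nbhd E w)) (induced_edges E (V - insert w (nbhd E w)))"
    using mis_le_leaf_split[OF simple assms(1)] assms(1) by simp
  have "card (nbhd E w) \<noteq> 0"
    using \<open>u \<in> nbhd E w\<close> finite_nbhd[OF simple] by auto
  show ?thesis
  proof (cases "card (nbhd E w) = 1")
    case True
    then obtain z where "nbhd E w = {z}"
      using card_1_singletonE by blast
    then have "insert w (nbhd E w) = {u, w}"
      using \<open>u \<in> nbhd E w\<close> by auto
    moreover have "insert u (nbhd E u) \<union> {u, w} \<subseteq> {u, w}"
      using assms(1) by simp
    ultimately have "mis (V - {u, w}) (induced_edges E (V - {u, w})) \<le> mis_bound c (card V - 2) s"
      using mis_delete_edge_nbhd_le[OF \<open>E u w\<close> _ \<open>{u, w} \<subseteq> V\<close> t] \<open>u \<noteq> w\<close>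
      by (simp add: numeral_2_eq_2)
    then have "mis V E \<le> 2 * mis_bound c (card V - 2) s"
      using split \<open>insert w (nbhd E w) = {u, w}\<close> by simp
    also have "\<dots> = mis_bound c (card V) t"
      using mis_bound_rec_isolated_edge[of c "card V" s] c_lower n t by simp
    finally show ?thesis .
  next
    case False
    let ?X = "insert w (nbhd E w)"
    have card_X: "card ?X = 3"
      using False assms(2) \<open>card (nbhd E w) \<noteq> 0\<close> card_closed_nbhd by simp
    have X: "?X \<subseteq> V"
      using \<open>{u, w} \<subseteq> V\<close> nbhd_subset[OF simple] by blast
    have "insert u (nbhd E u) \<union> ?X \<subseteq> ?X"
      using assms(1) \<open>u \<in> nbhd E w\<close> by simp
    then have "mis (V - ?X) (induced_edges E (V - ?X)) \<le> mis_bound c (card V - 3) s"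
      using mis_delete_edge_nbhd_le[OF \<open>E u w\<close> _ X t] card_X by simp
    moreover have "mis (V - {u, w}) (induced_edges E (V - {u, w})) \<le> mis_bound c (card V - 2) t"
      using mis_delete_le[of "{u, w}"] \<open>{u, w} \<subseteq> V\<close> \<open>u \<noteq> w\<close> by (simp add: numeral_2_eq_2)
    ultimately have "mis V E \<le> mis_bound c (card V - 2) (Suc s) + mis_bound c (card V - 3) s"
      using split t by simp
    also have "\<dots> \<le> mis_bound c (card V) t"
      using mis_bound_rec_leaf[OF c_lower] card_le_card_V[OF X] card_X t by simp
    finally show ?thesis .
  qed
qed

lemma mis_le_if_induced_path:
  assumes a: "nbhd E a = {v, a'}" "a' \<noteq> v"
    and a': "v \<notin> nbhd E a'" "card (nbhd E a') = 2"
    and v: "card (nbhd E v) = 2"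
  shows "mis V E \<le> mis_bound c (card V) t"
proof -
  have "E a v" "E a a'" "E a' a"
    using a(1) sym unfolding nbhd_def by blast+
  then obtain s where t: "t = Suc s"
    using obtain_Suc_if_edge by blast
  have "a \<noteq> v" "a \<noteq> a'" "a' \<notin> nbhd E a'"
    using irrefl \<open>E a v\<close> \<open>E a a'\<close> by (auto simp: nbhd_def)
  let ?N = "insert v (nbhd E v)" and ?P = "{v, a, a'}" and ?Y = "insert v (insert a' (nbhd E a'))"
  have sub: "?N \<subseteq> V" "?P \<subseteq> V" "?Y \<subseteq> V"
    using in_V \<open>E a v\<close> \<open>E a a'\<close> nbhd_subset[OF simple] by blast+
  have card: "card ?N = 3" "card ?P = 3" "card ?Y = 4"
    using v card_closed_nbhd a'(2) finite_nbhd[OF simple] a(2) a'(1)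
      \<open>a \<noteq> v\<close> \<open>a \<noteq> a'\<close> \<open>a' \<notin> nbhd E a'\<close> by auto
  have "insert a (nbhd E a) \<union> insert a' (nbhd E a') \<subseteq> ?Y"
    using a(1) \<open>E a' a\<close> by (auto simp: nbhd_def)
  then have "mis (V - ?Y) (induced_edges E (V - ?Y)) \<le> mis_bound c (card V - 4) s"
    using mis_delete_edge_nbhd_le[OF \<open>E a a'\<close> _ sub(3) t] card(3) by simp
  moreover have "mis (V - ?N) (induced_edges E (V - ?N)) \<le> mis_bound c (card V - 3) t"
    "mis (V - ?P) (induced_edges E (V - ?P)) \<le> mis_bound c (card V - 3) t"
    using mis_delete_le[OF sub(1)] mis_delete_le[OF sub(2)] card(1,2) by auto
  moreover have "mis V E \<le> mis (V - ?N) (induced_edges E (V - ?N))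
      + mis (V - ?P) (induced_edges E (V - ?P)) + mis (V - ?Y) (induced_edges E (V - ?Y))"
    using mis_le_split[OF simple, of v] mis_delete_vertex_le_leaf_split[OF simple a a'(1)] by linarith
  ultimately have "mis V E \<le> 2 * mis_bound c (card V - 3) (Suc s) + mis_bound c (card V - 4) s"
    using t by simp
  also have "\<dots> \<le> mis_bound c (card V) t"
    using mis_bound_rec_induced_path[OF c_lower] card_le_card_V[OF sub(3)] card(3) t by simp
  finally show ?thesis .
qed

lemma mis_le_if_degree_two:
  assumes "E v a" and degree_two: "\<And>y. nbhd E y \<noteq> {} \<Longrightarrow> card (nbhd E y) = 2"
  shows "mis V E \<le> mis_bound c (card V) t"
proof -
  have other_nbr: "\<exists>z'. nbhd E y = {z, z'} \<and> z' \<noteq> z" if "E y z" for y z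
  proof -
    have "z \<in> nbhd E y"
      using that by (simp add: nbhd_def)
    then have "card (nbhd E y) = 2"
      using degree_two by blast
    then obtain p q where "nbhd E y = {p, q}" "p \<noteq> q"
      by (auto simp: card_2_iff)
    then show ?thesis
      using \<open>z \<in> nbhd E y\<close> by auto
  qed
  obtain a' where a: "nbhd E a = {v, a'}" "a' \<noteq> v"
    using other_nbr[OF sym[OF assms(1)]] by blast
  then have "E a a'"
    by (auto simp: nbhd_def)
  (* the only use of triangle-freeness *)
  have "v \<notin> nbhd E a'"
  proof
    assume "v \<in> nbhd E a'"
    then have "E v a'"
      using sym by (simp add: nbhd_def)
    then show False
      using no_triangle assms(1) \<open>E a a'\<close> in_V unfolding triangle_free_def by blast
  qed
  moreover have "card (nbhd E a') = 2" "card (nbhd E v) = 2"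
    using degree_two sym \<open>E a a'\<close> assms(1) unfolding nbhd_def by blast+
  ultimately show ?thesis
    using mis_le_if_induced_path a by blast
qed

end

lemma simple_graph_degree_cases:
  assumes "simple_graph V E"
  obtains (edgeless) "\<And>u v. \<not> E u v"
    | (high_degree) v where "3 \<le> card (nbhd E v)"
    | (leaf) u w where "nbhd E u = {w}" "card (nbhd E w) \<le> 2"
    | (degree_two) v a where "E v a" "\<And>y. nbhd E y \<noteq> {} \<Longrightarrow> card (nbhd E y) = 2"
proof (cases "\<exists>v a. E v a")
  case False
  then show thesis
    using edgeless by blast
next
  case True
  then obtain v a where "E v a"
    by blast
  show thesis
  proof (cases "\<exists>v. 3 \<le> card (nbhd E v)")
    case True
    then show thesis
      using high_degree by blast
  next
    case False
    have low: "card (nbhd E y) \<le> 2" for y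
    proof -
      have "\<not> 3 \<le> card (nbhd E y)"
        using False by blast
      then show ?thesis
        by linarith
    qed
    show thesis
    proof (cases "\<exists>u. card (nbhd E u) = 1")
      case True
      then obtain u where "card (nbhd E u) = 1"
        by blast
      then obtain w where "nbhd E u = {w}"
        using card_1_singletonE by blast
      then show thesis
        using leaf low by blast
    next
      case False
      have "card (nbhd E y) = 2" if "nbhd E y \<noteq> {}" for y
      proof -
        have "card (nbhd E y) \<noteq> 0" "card (nbhd E y) \<noteq> 1"
          using that False finite_nbhd[OF assms] by auto
        then show ?thesis
          using low[of y] by linarith
      qed
      then show thesis
        using degree_two \<open>E v a\<close> by blast
    qed
  qed
qed

lemma mis_le_mis_bound:
  assumes "simple_graph V E" "triangle_free V E" "no_induced_matching V E (Suc t)"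
    and c: "7/5 \<le> c" "c ^ 2 \<le> 2"
  shows "mis V E \<le> mis_bound c (card V) t"
  using assms(1-3)
proof (induction "card V" arbitrary: V E t rule: less_induct)
  case less
  interpret mis_induction_step V E c t
  proof
    fix X s assume X: "X \<subseteq> V" "X \<noteq> {}"
      and no_matching: "no_induced_matching (V - X) (induced_edges E (V - X)) (Suc s)"
    have "finite V"
      using less.prems(1) unfolding simple_graph_def by blast
    then have "card (V - X) = card V - card X" "card (V - X) < card V"
      using X card_Diff_subset[OF finite_subset] by (auto intro!: psubset_card_mono)
    then show "mis (V - X) (induced_edges E (V - X)) \<le> mis_bound c (card V - card X) s"
      using less.hyps[OF _ simple_graph_induced_edges[OF less.prems(1) Diff_subset]
          triangle_free_induced_edges[OF less.prems(2) Diff_subset] no_matching]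
      by simp
  qed (use less.prems c in auto)
  show ?case
    using less.prems(1)
  proof (cases rule: simple_graph_degree_cases)
    case edgeless
    then show ?thesis
      using mis_edgeless[of E V] one_le_mis_bound[of c] c by simp
  qed (use mis_le_if_high_degree mis_le_if_leaf mis_le_if_degree_two in blast)+
qed

section \<open>The constant\<close>

lemma finite_c_const_roots: "finite {x :: real. x ^ 6 - 2 * x ^ 2 - 2 * x - 1 = 0}"
proof -
  let ?p = "[:-1, -2, -2, 0, 0, 0, 1:] :: real poly"
  have poly_p: "poly ?p x = x ^ 6 - 2 * x ^ 2 - 2 * x - 1" for x
    by (simp add: algebra_simps eval_nat_numeral)
  have "finite {x. poly ?p x = 0}"
    by (rule poly_roots_finite) simp
  then show ?thesis
    unfolding poly_p .
qed

lemma sq_le_2_if_root: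
  fixes x :: real
  assumes "x ^ 6 - 2 * x ^ 2 - 2 * x - 1 = 0"
  shows "x ^ 2 \<le> 2"
proof (rule ccontr)
  assume "\<not> x ^ 2 \<le> 2"
  then have big: "2 < x ^ 2"
    by simp
  have "2 * 2 < x ^ 2 * x ^ 2"
    by (rule mult_strict_mono[OF big big]) (use big in auto)
  then have "2 * 2 * x ^ 2 < x ^ 2 * x ^ 2 * x ^ 2"
    by (rule mult_strict_right_mono) (use big in auto)
  moreover have "x ^ 2 * x ^ 2 * x ^ 2 = x ^ 6"
    by (simp flip: power_add)
  moreover have "2 * x + 1 < 2 * x ^ 2"
  proof (cases "0 < x")
    case True
    have "7/5 < x"
    proof (rule ccontr)
      assume "\<not> 7/5 < x"
      then have "x ^ 2 \<le> (7/5) ^ 2"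
        using True by (intro power_mono) auto
      then show False
        using big by (simp add: power2_eq_square)
    qed
    then have "7/5 * (2/5) < x * (x - 1)"
      by (intro mult_strict_mono) auto
    then show ?thesis
      by (simp add: power2_eq_square algebra_simps)
  next
    case False
    then show ?thesis
      using big by linarith
  qed
  ultimately show False
    using assms by linarith
qed

lemma c_const_root: "c_const ^ 6 - 2 * c_const ^ 2 - 2 * c_const - 1 = 0"
  and c_const_ge: "7/5 \<le> c_const"
proof -
  have "\<exists>r::real. 7/5 \<le> r \<and> r \<le> 3/2 \<and> r ^ 6 - 2 * r ^ 2 - 2 * r - 1 = 0"
    by (rule IVT) (auto intro!: continuous_intros simp: power_divide)
  then obtain r :: real where r: "7/5 \<le> r" "r ^ 6 - 2 * r ^ 2 - 2 * r - 1 = 0"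
    by blast
  then show "c_const ^ 6 - 2 * c_const ^ 2 - 2 * c_const - 1 = 0"
    unfolding c_const_def using Max_in[OF finite_c_const_roots] by blast
  show "7/5 \<le> c_const"
    unfolding c_const_def using r Max_ge[OF finite_c_const_roots, of r] by simp
qed

lemma c_const_sq_le: "c_const ^ 2 \<le> 2"
  using sq_le_2_if_root[OF c_const_root] .

theorem mainTheorem2:
  fixes V :: "'a set" and E :: "'a \<Rightarrow> 'a \<Rightarrow> bool" and n t :: nat
  assumes "simple_graph V E"
    and "card V = n" and "n \<ge> 1" and "2 * t \<le> n"
    and "triangle_free V E"
    and "\<not> (\<exists>M. induced_matching V E M \<and> card M = t + 1)"
  shows "real (mis V E) \<le> 2 ^ t * c_const ^ (n - 2 * t)"
proof -
  have "no_induced_matching V E (Suc t)"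
    using assms(6) unfolding no_induced_matching_def by simp
  then have "mis V E \<le> mis_bound c_const n t"
    using mis_le_mis_bound[OF assms(1,5) _ c_const_ge c_const_sq_le] assms(2) by simp
  also have "\<dots> = 2 ^ t * c_const ^ (n - 2 * t)"
    using mis_bound_eq[OF _ assms(4)] c_const_ge by simp
  finally show ?thesis .
qed

end
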